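(* Let $l\geq 2$ be an integer and let $n=\binom{2l+1}{l}+1$. Then $\chi'_2(\overleftrightarrow{K_n})<\chi'_{1,2}(\overleftrightarrow{K_n})$.
   Context: For a simple graph $G$, the symmetric digraph $\overleftrightarrow{G}$ is obtained by replacing each edge $uv$ of $G$ by the pair of opposite arcs $\overrightarrow{uv}$ and $\overrightarrow{vu}$; $K_n$ is the complete graph on $n$ vertices. A monochromatic 2-path is a pair of arcs $\overrightarrow{uv},\overrightarrow{vw}$ with $w\neq u$ of the same colour; a monochromatic 2-cycle is a pair $\overrightarrow{uv},\overrightarrow{vu}$ of the same colour. $\chi'_{1,2}(\overleftrightarrow{G})$ is the least number of colours in an arc-colouring of $\overleftrightarrow{G}$ with no monochromatic 2-cycles and no monochromatic 2-paths; $\chi'_{2}(\overleftrightarrow{G})$ is the least number of colours in an arc-colouring with no monochromatic 2-paths. *)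

theory Defs
  imports Main
begin

text \<open>A simple graph is given by a vertex set V and a symmetric irreflexive
adjacency relation E.  The symmetric digraph has the arc (u,v) for every
edge uv, in both directions.\<close>

definition sym_arcs :: "'a set \<Rightarrow> ('a \<Rightarrow> 'a \<Rightarrow> bool) \<Rightarrow> ('a \<times> 'a) set" where
  "sym_arcs V E = {(u, v). u \<in> V \<and> v \<in> V \<and> E u v}"

definition arc_colouring :: "'a set \<Rightarrow> ('a \<Rightarrow> 'a \<Rightarrow> bool) \<Rightarrow> nat \<Rightarrow> ('a \<times> 'a \<Rightarrow> nat) \<Rightarrow> bool" where
  "arc_colouring V E k c \<longleftrightarrow> (\<forall>a \<in> sym_arcs V E. c a < k)"

definition no_mono_2path :: "'a set \<Rightarrow> ('a \<Rightarrow> 'a \<Rightarrow> bool) \<Rightarrow> ('a \<times> 'a \<Rightarrow> nat) \<Rightarrow> bool" where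
  "no_mono_2path V E c \<longleftrightarrow>
     (\<forall>u v w. (u, v) \<in> sym_arcs V E \<and> (v, w) \<in> sym_arcs V E \<and> w \<noteq> u \<longrightarrow> c (u, v) \<noteq> c (v, w))"

definition no_mono_2cycle :: "'a set \<Rightarrow> ('a \<Rightarrow> 'a \<Rightarrow> bool) \<Rightarrow> ('a \<times> 'a \<Rightarrow> nat) \<Rightarrow> bool" where
  "no_mono_2cycle V E c \<longleftrightarrow>
     (\<forall>u v. (u, v) \<in> sym_arcs V E \<longrightarrow> c (u, v) \<noteq> c (v, u))"

definition chi2 :: "'a set \<Rightarrow> ('a \<Rightarrow> 'a \<Rightarrow> bool) \<Rightarrow> nat" where
  "chi2 V E = (LEAST k. \<exists>c. arc_colouring V E k c \<and> no_mono_2path V E c)"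

definition chi12 :: "'a set \<Rightarrow> ('a \<Rightarrow> 'a \<Rightarrow> bool) \<Rightarrow> nat" where
  "chi12 V E = (LEAST k. \<exists>c. arc_colouring V E k c \<and> no_mono_2cycle V E c \<and> no_mono_2path V E c)"

definition K_V :: "nat \<Rightarrow> nat set" where "K_V n = {..<n}"
definition K_E :: "nat \<Rightarrow> nat \<Rightarrow> bool" where "K_E u v \<longleftrightarrow> u \<noteq> v"

end

theory Submission imports Defs "HOL-Combinatorics.Multiset_Permutations" begin

text \<open>Upper bound: label each vertex by an l-subset S of the 2l colours 0, ..., 2l - 1
together with a bit, which allows 2 C(2l, l) \<ge> n distinct labels.  Colour the arc uv
by an element of S_u - S_v, or by the extra colour 2l when S_u = S_v.  An arc entering v
then never has a colour in S_v, while an arc leaving v has one unless it uses colour 2l,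
and three vertices cannot share one set S.  So 2l + 1 colours suffice.

Lower bound: in a colouring without monochromatic 2-paths and 2-cycles, the colour of uv
lies in the set of colours leaving u but not in the set of colours leaving v.  Hence these
out-colour sets form an antichain of subsets of the k colours, and Sperner's theorem gives
n \<le> C(k, k div 2).  As C(2l + 1, l) < n, more than 2l + 1 colours are needed.\<close>

lemma card_permutations_of_set_take_eq:
  assumes "finite U" and "A \<subseteq> U"
  shows "card {xs \<in> permutations_of_set U. set (take (card A) xs) = A}
         = fact (card A) * fact (card U - card A)"
proof -
  have "finite A" using assms finite_subset by blast
  let ?Q = "{xs \<in> permutations_of_set U. set (take (card A) xs) = A}"
  let ?P = "permutations_of_set A \<times> permutations_of_set (U - A)"
  have inj: "inj_on (\<lambda>(p, q). p @ q) ?P"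
  proof (rule inj_onI, clarsimp)
    fix p q p' q'
    assume "p \<in> permutations_of_set A" "p' \<in> permutations_of_set A" "p @ q = p' @ q'"
    moreover have "length p = length p'" using calculation
      by (simp add: length_finite_permutations_of_set)
    ultimately show "p = p' \<and> q = q'" by simp
  qed
  have "(\<lambda>(p, q). p @ q) ` ?P = ?Q"
  proof
    show "(\<lambda>(p, q). p @ q) ` ?P \<subseteq> ?Q"
      using assms(2) by (auto simp: permutations_of_set_def distinct_card)
  next
    show "?Q \<subseteq> (\<lambda>(p, q). p @ q) ` ?P"
    proof clarify
      fix xs assume xs: "xs \<in> permutations_of_set U" and A: "set (take (card A) xs) = A"
      let ?p = "take (card A) xs" and ?q = "drop (card A) xs"
      have "?p @ ?q \<in> permutations_of_set U" using xs by simp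
      then have "(?p, ?q) \<in> ?P"
        using A by (auto simp: permutations_of_set_def simp del: append_take_drop_id)
      then show "xs \<in> (\<lambda>(p, q). p @ q) ` ?P" by (force intro: image_eqI[of _ _ "(?p, ?q)"])
    qed
  qed
  then have "card ?Q = card ?P" using card_image[OF inj] by simp
  also have "\<dots> = fact (card A) * fact (card U - card A)"
    using assms \<open>finite A\<close> by (simp add: card_cartesian_product card_Diff_subset)
  finally show ?thesis .
qed

text \<open>Sperner's theorem, by counting orderings of U: an ordering has at most one member
of an antichain as the set of its first elements, and each A is such a prefix set for
fact |A| * fact (|U| - |A|) \<ge> fact |U| / C(|U|, |U| div 2) orderings.\<close>

theorem sperner:
  assumes "finite U" and "F \<subseteq> Pow U"
    and antichain: "\<And>A B. A \<in> F \<Longrightarrow> B \<in> F \<Longrightarrow> A \<subseteq> B \<Longrightarrow> A = B"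
  shows "card F \<le> card U choose (card U div 2)"
proof -
  let ?N = "card U" and ?M = "card U choose (card U div 2)"
  let ?Q = "\<lambda>A. {xs \<in> permutations_of_set U. set (take (card A) xs) = A}"
  have "finite F" using assms(1,2) by (meson finite_Pow_iff finite_subset)
  have disjoint: "?Q A \<inter> ?Q B = {}" if "A \<in> F" "B \<in> F" "A \<noteq> B" for A B
  proof -
    have "A \<subseteq> B \<or> B \<subseteq> A" if "set (take (card A) xs) = A" "set (take (card B) xs) = B"
      for xs :: "'a list"
      using that set_take_subset_set_take[of "card A" "card B" xs]
        set_take_subset_set_take[of "card B" "card A" xs] by (cases "card A \<le> card B") auto
    then show ?thesis
      using antichain[OF that(1,2)] antichain[OF that(2,1)] \<open>A \<noteq> B\<close> by blast
  qed
  have orderings: "fact ?N \<le> card (?Q A) * ?M" if "A \<in> F" for A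
  proof -
    have "A \<subseteq> U" using that assms(2) by auto
    then have "card A \<le> ?N" using assms(1) card_mono by blast
    then have "fact ?N = fact (card A) * fact (?N - card A) * (?N choose card A)"
      using binomial_fact_lemma by simp
    also have "\<dots> \<le> fact (card A) * fact (?N - card A) * ?M"
      by (intro mult_left_mono binomial_maximum) simp
    also have "\<dots> = card (?Q A) * ?M"
      using card_permutations_of_set_take_eq[OF assms(1) \<open>A \<subseteq> U\<close>] by simp
    finally show ?thesis .
  qed
  have "(\<Sum>A\<in>F. card (?Q A)) = card (\<Union>A\<in>F. ?Q A)"
    using \<open>finite F\<close> disjoint by (intro card_UN_disjoint[symmetric]) auto
  also have "\<dots> \<le> card (permutations_of_set U)"
    using assms(1) by (intro card_mono) auto
  also have "\<dots> = fact ?N" using assms(1) by simp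
  finally have "(\<Sum>A\<in>F. card (?Q A)) \<le> fact ?N" .
  have "card F * fact ?N = (\<Sum>A\<in>F. fact ?N)" by simp
  also have "\<dots> \<le> (\<Sum>A\<in>F. card (?Q A)) * ?M"
    using sum_mono[OF orderings] by (simp add: sum_distrib_right)
  also have "\<dots> \<le> fact ?N * ?M"
    using \<open>(\<Sum>A\<in>F. card (?Q A)) \<le> fact ?N\<close> by simp
  finally have "card F * fact ?N \<le> ?M * fact ?N" by (simp only: mult.commute)
  then show ?thesis by simp
qed

lemma binomial_odd_central_less:
  assumes "l \<ge> (1::nat)"
  shows "(2 * l + 1) choose l < 2 * ((2 * l) choose l)"
proof -
  obtain m where "l = Suc m" using assms by (cases l) auto
  then have "(2 * l + 1) choose l = ((2 * l) choose m) + ((2 * l) choose l)"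
    by simp
  moreover have "(2 * l) choose m < (2 * l) choose l"
    using binomial_less_binomial_Suc[of m "2 * l"] \<open>l = Suc m\<close> by simp
  ultimately show ?thesis by simp
qed

lemma central_binomial_mono:
  assumes "m \<le> n"
  shows "m choose (m div 2) \<le> n choose (n div 2)"
  using binomial_right_mono[OF assms] binomial_maximum le_trans by blast

lemma sym_arcs_K: "sym_arcs (K_V n) K_E = {(u, v). u < n \<and> v < n \<and> u \<noteq> v}"
  by (auto simp: sym_arcs_def K_V_def K_E_def)

lemma colouring_from_label_sets:
  assumes S: "\<And>v. v \<in> V \<Longrightarrow> S v \<subseteq> {..<2 * l} \<and> card (S v) = l"
    and at_most_two: "\<And>u v w. \<lbrakk>u \<in> V; v \<in> V; w \<in> V; u \<noteq> v; v \<noteq> w; w \<noteq> u; S u = S v; S v = S w\<rbrakk>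
                        \<Longrightarrow> False"
    and irrefl: "\<And>v. \<not> E v v"
  shows "\<exists>c. arc_colouring V E (2 * l + 1) c \<and> no_mono_2path V E c"
proof -
  have nonempty: "S u - S v \<noteq> {}" if "u \<in> V" "v \<in> V" "S u \<noteq> S v" for u v
  proof
    assume "S u - S v = {}"
    moreover have "finite (S v)" using S[OF that(2)] finite_subset by blast
    ultimately show False using card_subset_eq[of "S v" "S u"] S that by auto
  qed
  define c where "c = (\<lambda>(u, v). if S u = S v then 2 * l else (SOME a. a \<in> S u - S v))"
  have c_eq: "c (u, v) = 2 * l" if "S u = S v" for u v
    using that unfolding c_def by simp
  have c_in: "c (u, v) \<in> S u - S v" "c (u, v) < 2 * l" if "u \<in> V" "v \<in> V" "S u \<noteq> S v" for u v
  proof -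
    have "(SOME a. a \<in> S u - S v) \<in> S u - S v"
      using nonempty[OF that] some_in_eq by metis
    then show "c (u, v) \<in> S u - S v" "c (u, v) < 2 * l"
      using S[OF that(1)] that(3) unfolding c_def by auto
  qed
  have arc: "u \<in> V" "v \<in> V" "u \<noteq> v" if "(u, v) \<in> sym_arcs V E" for u v
    using that irrefl unfolding sym_arcs_def by auto
  have "c (u, v) < 2 * l + 1" if "u \<in> V" "v \<in> V" for u v
    using c_eq c_in that by (cases "S u = S v") fastforce+
  then have "arc_colouring V E (2 * l + 1) c"
    unfolding arc_colouring_def using arc by auto
  moreover have "no_mono_2path V E c"
    unfolding no_mono_2path_def
  proof (intro allI impI notI)
    fix u v w
    assume "(u, v) \<in> sym_arcs V E \<and> (v, w) \<in> sym_arcs V E \<and> w \<noteq> u"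
      and same: "c (u, v) = c (v, w)"
    then have V: "u \<in> V" "v \<in> V" "w \<in> V" and "u \<noteq> v" "v \<noteq> w" "w \<noteq> u" using arc by blast+
    show False
    proof (cases "S u = S v")
      case True
      have "S v = S w"
      proof (rule ccontr)
        assume "S v \<noteq> S w"
        then have "c (v, w) < 2 * l" using c_in V by blast
        then show False using same c_eq[OF True] by simp
      qed
      then show False
        using at_most_two V \<open>u \<noteq> v\<close> \<open>v \<noteq> w\<close> \<open>w \<noteq> u\<close> True by blast
    next
      case False
      then have "c (u, v) \<notin> S v" "c (u, v) < 2 * l" using c_in V by blast+
      then show False
        using same c_eq c_in[of v w] V by (cases "S v = S w") auto
    qed
  qed
  ultimately show ?thesis by blast
qed

lemma chi2_le_if_card_le_twice_central_binomial:
  assumes "finite V" and "card V \<le> 2 * ((2 * l) choose l)" and "\<And>v. \<not> E v v"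
  shows "chi2 V E \<le> 2 * l + 1"
proof -
  let ?Labels = "{S. S \<subseteq> {..<2 * l} \<and> card S = l} \<times> (UNIV :: bool set)"
  have "finite ?Labels" by (auto intro: finite_subset[of _ "Pow {..<2 * l}"])
  moreover have "card ?Labels = 2 * ((2 * l) choose l)"
    by (simp add: card_cartesian_product n_subsets)
  ultimately obtain f where f: "f ` V \<subseteq> ?Labels" "inj_on f V"
    using card_le_inj[OF assms(1), of ?Labels] assms(2) by auto
  have "fst (f v) \<subseteq> {..<2 * l} \<and> card (fst (f v)) = l" if "v \<in> V" for v
  proof -
    have "f v \<in> ?Labels" using f(1) that by blast
    then show ?thesis by auto
  qed
  moreover have False
    if "u \<in> V" "v \<in> V" "w \<in> V" "u \<noteq> v" "v \<noteq> w" "w \<noteq> u"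
      and "fst (f u) = fst (f v)" "fst (f v) = fst (f w)" for u v w
  proof -
    have "f u \<noteq> f v" "f v \<noteq> f w" "f w \<noteq> f u"
      using f(2) that(1-6) by (auto dest: inj_onD)
    then have "snd (f u) \<noteq> snd (f v)" "snd (f v) \<noteq> snd (f w)" "snd (f w) \<noteq> snd (f u)"
      using that(7,8) by (auto simp: prod_eq_iff)
    then show False by auto
  qed
  ultimately obtain c where "arc_colouring V E (2 * l + 1) c" "no_mono_2path V E c"
    using colouring_from_label_sets[of V "\<lambda>v. fst (f v)" l E] assms(3) by blast
  then show ?thesis unfolding chi2_def by (intro Least_le) blast
qed

definition out_colours :: "'a set \<Rightarrow> ('a \<Rightarrow> 'a \<Rightarrow> bool) \<Rightarrow> ('a \<times> 'a \<Rightarrow> nat) \<Rightarrow> 'a \<Rightarrow> nat set" where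
  "out_colours V E c v = {c (v, w) | w. (v, w) \<in> sym_arcs V E}"

lemma out_colours_not_subset:
  assumes "no_mono_2cycle V E c" and "no_mono_2path V E c" and "(u, v) \<in> sym_arcs V E"
  shows "\<not> out_colours V E c u \<subseteq> out_colours V E c v"
proof
  assume "out_colours V E c u \<subseteq> out_colours V E c v"
  moreover have "c (u, v) \<in> out_colours V E c u"
    using assms(3) unfolding out_colours_def by blast
  ultimately obtain w where "(v, w) \<in> sym_arcs V E" "c (u, v) = c (v, w)"
    unfolding out_colours_def by blast
  then show False
    using assms unfolding no_mono_2cycle_def no_mono_2path_def by (cases "w = u") blast+
qed

lemma K_colouring_card_le_central_binomial:
  assumes "arc_colouring (K_V n) K_E k c"
    and "no_mono_2cycle (K_V n) K_E c" and "no_mono_2path (K_V n) K_E c"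
  shows "n \<le> k choose (k div 2)"
proof -
  let ?Out = "out_colours (K_V n) K_E c"
  have incomparable: "\<not> ?Out u \<subseteq> ?Out v" if "u < n" "v < n" "u \<noteq> v" for u v
    using out_colours_not_subset[OF assms(2,3)] that by (simp add: sym_arcs_K)
  have "inj_on ?Out {..<n}"
    by (rule inj_onI) (use incomparable in blast)
  then have "n = card (?Out ` {..<n})" by (simp add: card_image)
  also have "\<dots> \<le> card {..<k} choose (card {..<k} div 2)"
  proof (rule sperner)
    show "?Out ` {..<n} \<subseteq> Pow {..<k}"
      using assms(1) unfolding arc_colouring_def out_colours_def by auto
    show "A = B" if "A \<in> ?Out ` {..<n}" "B \<in> ?Out ` {..<n}" "A \<subseteq> B" for A B
      using that incomparable by blast
  qed simp
  finally show ?thesis by simp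
qed

lemma chi12_attained:
  assumes "finite V" and "\<And>v. \<not> E v v" and "\<And>u v. E u v \<Longrightarrow> E v u"
  shows "\<exists>c. arc_colouring V E (chi12 V E) c \<and> no_mono_2cycle V E c \<and> no_mono_2path V E c"
  unfolding chi12_def
proof (rule LeastI_ex)
  have "finite (sym_arcs V E)"
    using assms(1) unfolding sym_arcs_def by (auto intro: finite_subset[of _ "V \<times> V"])
  then obtain c where c: "bij_betw c (sym_arcs V E) {0..<card (sym_arcs V E)}"
    using ex_bij_betw_finite_nat by blast
  have arc: "u \<noteq> v" "(v, u) \<in> sym_arcs V E" if "(u, v) \<in> sym_arcs V E" for u v
    using that assms(2,3) unfolding sym_arcs_def by auto
  have "arc_colouring V E (card (sym_arcs V E)) c"
    using c unfolding arc_colouring_def bij_betw_def by auto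
  moreover have "no_mono_2cycle V E c" "no_mono_2path V E c"
    using bij_betw_imp_inj_on[OF c] arc unfolding no_mono_2cycle_def no_mono_2path_def
    by (fastforce dest: inj_onD)+
  ultimately show "\<exists>k c. arc_colouring V E k c \<and> no_mono_2cycle V E c \<and> no_mono_2path V E c"
    by blast
qed

lemma chi12_K_greater_if_central_binomial_less:
  assumes "k choose (k div 2) < n"
  shows "k < chi12 (K_V n) K_E"
proof -
  obtain c where "arc_colouring (K_V n) K_E (chi12 (K_V n) K_E) c"
    "no_mono_2cycle (K_V n) K_E c" "no_mono_2path (K_V n) K_E c"
    using chi12_attained[of "K_V n" K_E] by (auto simp: K_V_def K_E_def)
  then have "n \<le> chi12 (K_V n) K_E choose (chi12 (K_V n) K_E div 2)"
    by (rule K_colouring_card_le_central_binomial)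
  then show ?thesis
    using assms central_binomial_mono[of "chi12 (K_V n) K_E" k] by linarith
qed

theorem proposition4p2:
  fixes l n :: nat
  assumes "l \<ge> 2"
    and "n = ((2 * l + 1) choose l) + 1"
  shows "chi2 (K_V n) K_E < chi12 (K_V n) K_E"
proof -
  have "n \<le> 2 * ((2 * l) choose l)"
    using binomial_odd_central_less[of l] assms by simp
  then have "chi2 (K_V n) K_E \<le> 2 * l + 1"
    by (intro chi2_le_if_card_le_twice_central_binomial) (simp_all add: K_V_def K_E_def)
  also have "2 * l + 1 < chi12 (K_V n) K_E"
    by (rule chi12_K_greater_if_central_binomial_less) (simp add: assms(2))
  finally show ?thesis .
qed

end
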